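(* Let $\lambda,\nu$ be partitions and $s$ a nonnegative integer with $|\nu|\le|\lambda|+s$ and $\mathrm{Std}^0_s(\nu\setminus\lambda)\ne\emptyset$, and suppose that $\mathsf t_{k\leftrightarrow k+1}$ exists for every $\mathsf t\in\mathrm{Std}^0_s(\nu\setminus\lambda)$ and every $1\le k\le s-1$. Then neither of the skew partitions $\nu\ominus(\lambda\cap\nu)$ and $\lambda\ominus(\lambda\cap\nu)$ contains two nodes in the same column.
   Context: $\lambda\cap\nu$ is the partition with parts $\min\{\lambda_i,\nu_i\}$; for $\alpha\subseteq\beta$, $\beta\ominus\alpha$ is the set difference of Young diagrams. $\pm\varepsilon_i$ ($i\ge1$) adds/removes a box in row $i$, $\varepsilon_0=0$. $\mathrm{Std}_s(\nu\setminus\lambda)$ is the set of sequences $\mathsf t=(-\varepsilon_{i_1},+\varepsilon_{j_1},\dots,-\varepsilon_{i_s},+\varepsilon_{j_s})$, $i_k,j_k\ge0$, such that with $\mathsf t(0)=\lambda$, $\mathsf t(k-\frac12)=\mathsf t(k-1)-\varepsilon_{i_k}$, $\mathsf t(k)=\mathsf t(k-\frac12)+\varepsilon_{j_k}$ all are partitions and $\mathsf t(s)=\nu$; $(-\varepsilon_{i_k},+\varepsilon_{j_k})$ is the $k$-th integral step. $\mathrm{Std}^0_s(\nu\setminus\lambda)$ is the subset of those with no integral step $(-\varepsilon_0,+\varepsilon_0)$ and with $\#\{k:i_k=i\}\le\lambda_i$ for every $i\ge1$. $\mathsf t_{k\leftrightarrow k+1}$ is the sequence obtained by interchanging the $k$-th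 and $(k+1)$-th integral steps; it exists if it lies in $\mathrm{Std}_s(\nu\setminus\lambda)$. *)

theory Defs
  imports Main
begin

text \<open>A partition is a function from rows to row lengths; rows are indexed by
  i \<ge> 1, the value at 0 is fixed to be 0 (so that \<epsilon>_0 = 0 is harmless).\<close>
definition is_partition :: "(nat \<Rightarrow> nat) \<Rightarrow> bool" where
  "is_partition p \<longleftrightarrow> p 0 = 0 \<and> (\<forall>i\<ge>1. p (Suc i) \<le> p i) \<and> finite {i. p i \<noteq> 0}"

definition young_diagram :: "(nat \<Rightarrow> nat) \<Rightarrow> (nat \<times> nat) set" where
  "young_diagram p = {(r, c). 1 \<le> r \<and> 1 \<le> c \<and> c \<le> p r}"

definition psize :: "(nat \<Rightarrow> nat) \<Rightarrow> nat" where
  "psize p = sum p {i. p i \<noteq> 0}"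

definition pinter :: "(nat \<Rightarrow> nat) \<Rightarrow> (nat \<Rightarrow> nat) \<Rightarrow> (nat \<Rightarrow> nat)" where
  "pinter p q = (\<lambda>i. min (p i) (q i))"

definition skew :: "(nat \<Rightarrow> nat) \<Rightarrow> (nat \<Rightarrow> nat) \<Rightarrow> (nat \<times> nat) set" where
  "skew beta alpha = young_diagram beta - young_diagram alpha"

definition no_two_in_column :: "(nat \<times> nat) set \<Rightarrow> bool" where
  "no_two_in_column S \<longleftrightarrow> (\<forall>r1 r2 c. (r1, c) \<in> S \<longrightarrow> (r2, c) \<in> S \<longrightarrow> r1 = r2)"

text \<open>-\<epsilon>_i and +\<epsilon>_j, with \<epsilon>_0 = 0\<close>
definition remove_box :: "(nat \<Rightarrow> nat) \<Rightarrow> nat \<Rightarrow> (nat \<Rightarrow> nat)" where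
  "remove_box p i = (if i = 0 then p else p(i := p i - 1))"

definition add_box :: "(nat \<Rightarrow> nat) \<Rightarrow> nat \<Rightarrow> (nat \<Rightarrow> nat)" where
  "add_box p j = (if j = 0 then p else p(j := p j + 1))"

text \<open>An integral step (i, j) stands for (-\<epsilon>_i, +\<epsilon>_j).  valid_path p t q: starting
  at p, every intermediate t(k-1/2), t(k) is a partition (removal of a box from an
  empty row is not allowed), ending at q.\<close>
fun valid_path :: "(nat \<Rightarrow> nat) \<Rightarrow> (nat \<times> nat) list \<Rightarrow> (nat \<Rightarrow> nat) \<Rightarrow> bool" where
  "valid_path p [] q \<longleftrightarrow> p = q"
| "valid_path p ((i, j) # t) q \<longleftrightarrow>
     (i = 0 \<or> 0 < p i) \<and> is_partition (remove_box p i) \<and>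
     is_partition (add_box (remove_box p i) j) \<and>
     valid_path (add_box (remove_box p i) j) t q"

definition Std :: "nat \<Rightarrow> (nat \<Rightarrow> nat) \<Rightarrow> (nat \<Rightarrow> nat) \<Rightarrow> (nat \<times> nat) list set" where
  "Std s lam nu = {t. length t = s \<and> is_partition lam \<and> valid_path lam t nu}"

definition Std0 :: "nat \<Rightarrow> (nat \<Rightarrow> nat) \<Rightarrow> (nat \<Rightarrow> nat) \<Rightarrow> (nat \<times> nat) list set" where
  "Std0 s lam nu = {t \<in> Std s lam nu. (0, 0) \<notin> set t \<and>
      (\<forall>i\<ge>1. length (filter (\<lambda>st. fst st = i) t) \<le> lam i)}"

text \<open>t_{k<->k+1}: interchange the k-th and (k+1)-th integral steps (1-based k).\<close>
definition swap_steps :: "nat \<Rightarrow> (nat \<times> nat) list \<Rightarrow> (nat \<times> nat) list" where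
  "swap_steps k t = t[k - 1 := t ! k, k := t ! (k - 1)]"

end

theory Submission
  imports Defs "HOL-Library.Multiset"
begin

text \<open>Adjacent interchanges preserve the multiset of integral steps, so under the
  hypothesis \<open>Std\<^sup>0\<close> is closed under them, and hence under every stable
  reordering that moves the steps of one kind to the front.  Move first all steps
  that add a box to row \<open>x + 1\<close> from another row: afterwards row \<open>x + 1\<close> already
  has at least \<open>\<nu>(x + 1)\<close> boxes while row \<open>x\<close> has at most \<open>\<lambda>(x)\<close>, and since
  the intermediate shape is a partition, \<open>\<nu>(x + 1) \<le> \<lambda>(x)\<close>.  Moving first the
  steps that remove a box from row \<open>x\<close> gives \<open>\<lambda>(x + 1) \<le> \<nu>(x)\<close> in the same way.
  These interlacing inequalities say that both skew diagrams are horizontal strips.\<close>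

definition apply_step :: "(nat \<Rightarrow> nat) \<Rightarrow> nat \<times> nat \<Rightarrow> (nat \<Rightarrow> nat)" where
  "apply_step p st = add_box (remove_box p (fst st)) (snd st)"

definition swap_closed :: "(nat \<times> nat) list set \<Rightarrow> bool" where
  "swap_closed S \<longleftrightarrow> (\<forall>t\<in>S. \<forall>k. 1 \<le> k \<and> k < length t \<longrightarrow> swap_steps k t \<in> S)"

lemma partition_antimono:
  assumes "is_partition p" "1 \<le> a" "a \<le> b"
  shows "p b \<le> p a"
  using assms(3)
proof (induction b rule: dec_induct)
  case (step n)
  with assms(1,2) have "p (Suc n) \<le> p n" by (simp add: is_partition_def)
  with step show ?case by simp
qed simp

lemma mset_swap_steps:
  assumes "1 \<le> k" "k < length t"
  shows "mset (swap_steps k t) = mset t"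
  using assms mset_swap[of k t "k - 1"] by (simp add: swap_steps_def)

lemma swap_steps_append:
  "swap_steps (Suc (length a)) (a @ x # y # zs) = a @ y # x # zs"
  by (simp add: swap_steps_def list_update_append nth_append)

lemma swap_closed_Std0:
  assumes "\<forall>t \<in> Std0 s lam nu. \<forall>k. 1 \<le> k \<and> k \<le> s - 1 \<longrightarrow> swap_steps k t \<in> Std s lam nu"
  shows "swap_closed (Std0 s lam nu)"
  unfolding swap_closed_def
proof (intro ballI allI impI)
  fix t k assume t: "t \<in> Std0 s lam nu" and k: "1 \<le> k \<and> k < length t"
  then have "swap_steps k t \<in> Std s lam nu" using assms by (auto simp: Std0_def Std_def)
  moreover have m: "mset (swap_steps k t) = mset t" using k by (simp add: mset_swap_steps)
  then have "set (swap_steps k t) = set t" by (metis set_mset_mset)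
  moreover have "length (filter P (swap_steps k t)) = length (filter P t)" for P
    by (metis m mset_filter size_mset)
  ultimately show "swap_steps k t \<in> Std0 s lam nu" using t by (simp add: Std0_def)
qed

lemma swap_closed_move_right:
  assumes "swap_closed S"
  shows "a @ x # ys @ zs \<in> S \<Longrightarrow> a @ ys @ x # zs \<in> S"
proof (induction ys arbitrary: a)
  case (Cons y ys)
  have "swap_steps (Suc (length a)) (a @ x # y # ys @ zs) \<in> S"
    using assms Cons.prems by (simp add: swap_closed_def)
  then have "(a @ [y]) @ x # ys @ zs \<in> S" by (simp add: swap_steps_append)
  from Cons.IH[OF this] show ?case by simp
qed simp

lemma swap_closed_filter_append:
  assumes "swap_closed S"
  shows "a @ t \<in> S \<Longrightarrow> a @ filter P t @ filter (\<lambda>x. \<not> P x) t \<in> S"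
proof (induction t arbitrary: a)
  case (Cons x t)
  then have "a @ x # filter P t @ filter (\<lambda>x. \<not> P x) t \<in> S"
    using Cons.IH[of "a @ [x]"] by simp
  then show ?case
    using swap_closed_move_right[OF assms, of a x "filter P t"] by simp
qed simp

lemma valid_path_append:
  "valid_path p (u @ v) q \<longleftrightarrow>
     valid_path p u (foldl apply_step p u) \<and> valid_path (foldl apply_step p u) v q"
proof (induction u arbitrary: p)
  case (Cons st u)
  then show ?case by (cases st) (simp add: apply_step_def)
qed simp

lemma valid_path_is_partition:
  "valid_path p t q \<Longrightarrow> is_partition p \<Longrightarrow> is_partition q"
  by (induction p t q rule: valid_path.induct) simp_all

lemma valid_path_row_le_gains:
  "valid_path p t q \<Longrightarrow> q x \<le> p x + length (filter (\<lambda>(i, j). j = x \<and> i \<noteq> x) t)"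
proof (induction p t q rule: valid_path.induct)
  case (2 p i j t q)
  have "q x \<le> add_box (remove_box p i) j x + length (filter (\<lambda>(i, j). j = x \<and> i \<noteq> x) t)"
    using 2 by simp
  moreover have "add_box (remove_box p i) j x \<le> p x + (if j = x \<and> i \<noteq> x then 1 else 0)"
    using 2(2) by (auto simp: add_box_def remove_box_def)
  ultimately show ?case by auto
qed simp

lemma valid_path_row_le_losses:
  "valid_path p t q \<Longrightarrow> p x \<le> q x + length (filter (\<lambda>(i, j). i = x \<and> j \<noteq> x) t)"
proof (induction p t q rule: valid_path.induct)
  case (2 p i j t q)
  have "add_box (remove_box p i) j x \<le> q x + length (filter (\<lambda>(i, j). i = x \<and> j \<noteq> x) t)"
    using 2 by simp
  moreover have "p x \<le> add_box (remove_box p i) j x + (if i = x \<and> j \<noteq> x then 1 else 0)"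
    using 2(2) by (auto simp: add_box_def remove_box_def)
  ultimately show ?case by auto
qed simp

lemma foldl_apply_step_gains:
  assumes "\<forall>st\<in>set u. snd st = x \<and> fst st \<noteq> x" "1 \<le> x"
  shows "foldl apply_step p u x = p x + length u \<and>
    (\<forall>y. y \<noteq> x \<longrightarrow> foldl apply_step p u y \<le> p y)"
  using assms(1)
proof (induction u arbitrary: p)
  case (Cons st u)
  have "apply_step p st x = p x + 1" "\<forall>y. y \<noteq> x \<longrightarrow> apply_step p st y \<le> p y"
    using Cons.prems assms(2) by (auto simp: apply_step_def add_box_def remove_box_def)
  with Cons.IH[of "apply_step p st"] Cons.prems show ?case by fastforce
qed simp

lemma foldl_apply_step_losses:
  assumes "\<forall>st\<in>set u. fst st = x \<and> snd st \<noteq> x" "1 \<le> x"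
  shows "foldl apply_step p u x = p x - length u \<and>
    (\<forall>y. y \<noteq> x \<longrightarrow> p y \<le> foldl apply_step p u y)"
  using assms(1)
proof (induction u arbitrary: p)
  case (Cons st u)
  have "apply_step p st x = p x - 1" "\<forall>y. y \<noteq> x \<longrightarrow> p y \<le> apply_step p st y"
    using Cons.prems assms(2) by (auto simp: apply_step_def add_box_def remove_box_def)
  with Cons.IH[of "apply_step p st"] Cons.prems show ?case by fastforce
qed simp

lemma reorderable_path_interlace:
  assumes lam: "is_partition lam" and t: "valid_path lam t nu"
    and reorder: "\<And>P. valid_path lam (filter P t @ filter (\<lambda>x. \<not> P x) t) nu"
    and x: "1 \<le> x"
  shows "nu (Suc x) \<le> lam x" and "lam (Suc x) \<le> nu x"
proof -
  have prefix_partition: "is_partition (foldl apply_step lam (filter P t))" for P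
    using reorder[of P] valid_path_is_partition[OF _ lam] unfolding valid_path_append by blast
  let ?u = "filter (\<lambda>(i, j). j = Suc x \<and> i \<noteq> Suc x) t"
  let ?m = "foldl apply_step lam ?u"
  have gains: "?m (Suc x) = lam (Suc x) + length ?u \<and> (\<forall>y. y \<noteq> Suc x \<longrightarrow> ?m y \<le> lam y)"
    by (intro foldl_apply_step_gains) auto
  have "nu (Suc x) \<le> ?m (Suc x)" using gains valid_path_row_le_gains[OF t] by simp
  also have "\<dots> \<le> ?m x" using partition_antimono[OF prefix_partition] x by simp
  also have "\<dots> \<le> lam x" using gains by simp
  finally show "nu (Suc x) \<le> lam x" .
  let ?v = "filter (\<lambda>(i, j). i = x \<and> j \<noteq> x) t"
  let ?n = "foldl apply_step lam ?v"
  have losses: "?n x = lam x - length ?v \<and> (\<forall>y. y \<noteq> x \<longrightarrow> lam y \<le> ?n y)"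
    using x by (intro foldl_apply_step_losses) auto
  have "lam (Suc x) \<le> ?n (Suc x)" using losses by simp
  also have "\<dots> \<le> ?n x" using partition_antimono[OF prefix_partition] x by simp
  also have "\<dots> \<le> nu x" using losses valid_path_row_le_losses[OF t, of x] by simp
  finally show "lam (Suc x) \<le> nu x" .
qed

lemma no_two_in_column_skew_pinter:
  assumes "is_partition mu" and interlace: "\<And>x. 1 \<le> x \<Longrightarrow> nu (Suc x) \<le> mu x"
  shows "no_two_in_column (skew nu (pinter mu nu))"
proof -
  have False if "1 \<le> r1" "r1 < r2" "mu r1 < c" "c \<le> nu r2" for r1 r2 c
  proof -
    have "nu r2 \<le> mu (r2 - 1)" using interlace[of "r2 - 1"] that by simp
    also have "\<dots> \<le> mu r1" using partition_antimono[OF assms(1)] that by simp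
    finally show False using that by simp
  qed
  then show ?thesis
    unfolding no_two_in_column_def skew_def pinter_def young_diagram_def
    by (auto simp: not_le) (metis linorder_neqE_nat)
qed

theorem lemma4p22:
  fixes lam nu :: "nat \<Rightarrow> nat" and s :: nat
  assumes "is_partition lam" and "is_partition nu"
    and "psize nu \<le> psize lam + s"
    and "Std0 s lam nu \<noteq> {}"
    and "\<forall>t \<in> Std0 s lam nu. \<forall>k. 1 \<le> k \<and> k \<le> s - 1 \<longrightarrow> swap_steps k t \<in> Std s lam nu"
  shows "no_two_in_column (skew nu (pinter lam nu)) \<and>
         no_two_in_column (skew lam (pinter lam nu))"
proof -
  obtain t where t: "t \<in> Std0 s lam nu" using assms(4) by blast
  have reorder: "valid_path lam (filter P t @ filter (\<lambda>x. \<not> P x) t) nu" for P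
    using swap_closed_filter_append[OF swap_closed_Std0[OF assms(5)], of "[]" t P] t
    by (simp add: Std0_def Std_def)
  have path: "valid_path lam t nu" using t by (simp add: Std0_def Std_def)
  note interlace = reorderable_path_interlace[OF assms(1) path reorder]
  have "pinter lam nu = pinter nu lam" by (auto simp: pinter_def)
  then show ?thesis
    using no_two_in_column_skew_pinter[OF assms(1) interlace(1)]
      no_two_in_column_skew_pinter[OF assms(2) interlace(2)]
    by simp
qed

end
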